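(* There is an absolute constant $c\ge1$ such that for all $x\in\mathbb R$ and all $t\in[x-\tfrac12 d(x),\,x+\tfrac12 d(x)]$: $$c^{-1}v(x)\le v(t)\le c\,v(x),\qquad c^{-1}u(x)\le u(t)\le c\,u(x).$$
   Context: Let $q:\mathbb R\to\mathbb R$ be measurable with $q\in L_1^{\mathrm{loc}}(\mathbb R)$ and $q(x)\ge1$ a.e. A principal fundamental system of solutions (PFSS) of $z''=q(x)z$ is a pair $u,v$ of solutions ($C^1$, derivative locally absolutely continuous, equation a.e.) such that for all $x$: $u>0$, $v>0$, $u'<0$, $v'>0$, $v'u-u'v=1$, $u(x)=v(x)\int_x^\infty v(t)^{-2}dt$, and $u,u'\to0$ as $x\to\infty$, $v,v'\to0$ as $x\to-\infty$, $v,v'\to\infty$ as $x\to\infty$, $u,|u'|\to\infty$ as $x\to-\infty$. Fix a PFSS $\{u,v\}$. For each $x\in\mathbb R$, $d(x)$ denotes the unique positive solution $d$ of $d\int_{x-d}^{x+d}q(t)\,dt=2$. *)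

theory Defs
  imports "HOL-Analysis.Analysis"
begin

definition abs_cont_on :: "real \<Rightarrow> real \<Rightarrow> (real \<Rightarrow> real) \<Rightarrow> bool" where
  "abs_cont_on a b f \<longleftrightarrow>
     (\<forall>e>0. \<exists>\<delta>>0. \<forall>(n::nat) (l::nat \<Rightarrow> real) (r::nat \<Rightarrow> real).
        (\<forall>i<n. a \<le> l i \<and> l i \<le> r i \<and> r i \<le> b) \<and>
        (\<forall>i<n. \<forall>j<n. i \<noteq> j \<longrightarrow> r i \<le> l j \<or> r j \<le> l i) \<and>
        (\<Sum>i<n. r i - l i) < \<delta>
        \<longrightarrow> (\<Sum>i<n. \<bar>f (r i) - f (l i)\<bar>) < e)"

definition loc_abs_cont :: "(real \<Rightarrow> real) \<Rightarrow> bool" where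
  "loc_abs_cont f \<longleftrightarrow> (\<forall>a b. a \<le> b \<longrightarrow> abs_cont_on a b f)"

definition admissible_q :: "(real \<Rightarrow> real) \<Rightarrow> bool" where
  "admissible_q q \<longleftrightarrow>
     q \<in> borel_measurable lborel \<and>
     (\<forall>a b. set_integrable lborel {a..b} q) \<and>
     (AE x in lborel. q x \<ge> 1)"

definition is_solution :: "(real \<Rightarrow> real) \<Rightarrow> (real \<Rightarrow> real) \<Rightarrow> (real \<Rightarrow> real) \<Rightarrow> bool" where
  "is_solution q z z' \<longleftrightarrow>
     (\<forall>x. (z has_real_derivative z' x) (at x)) \<and>
     continuous_on UNIV z' \<and>
     loc_abs_cont z' \<and>
     (AE x in lborel. (z' has_real_derivative q x * z x) (at x))"

definition is_PFSS :: "(real \<Rightarrow> real) \<Rightarrow> (real \<Rightarrow> real) \<Rightarrow> (real \<Rightarrow> real)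
    \<Rightarrow> (real \<Rightarrow> real) \<Rightarrow> (real \<Rightarrow> real) \<Rightarrow> bool" where
  "is_PFSS q u u' v v' \<longleftrightarrow>
     is_solution q u u' \<and> is_solution q v v' \<and>
     (\<forall>x. u x > 0 \<and> v x > 0 \<and> u' x < 0 \<and> v' x > 0 \<and>
          v' x * u x - u' x * v x = 1 \<and>
          (\<lambda>t. 1 / (v t)^2) integrable_on {x..} \<and>
          u x = v x * integral {x..} (\<lambda>t. 1 / (v t)^2)) \<and>
     (u \<longlongrightarrow> 0) at_top \<and> (u' \<longlongrightarrow> 0) at_top \<and>
     (v \<longlongrightarrow> 0) at_bot \<and> (v' \<longlongrightarrow> 0) at_bot \<and>
     filterlim v at_top at_top \<and> filterlim v' at_top at_top \<and>
     filterlim u at_top at_bot \<and> filterlim (\<lambda>x. \<bar>u' x\<bar>) at_top at_bot"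

definition dfun :: "(real \<Rightarrow> real) \<Rightarrow> real \<Rightarrow> real" where
  "dfun q x = (THE d. d > 0 \<and> d * integral {x - d..x + d} q = 2)"

end

theory Submission
  imports Defs
begin

text \<open>
  Let \<open>z > 0\<close> solve \<open>z'' = q z\<close> and be increasing, and write \<open>Q\<close> for the integral of \<open>q\<close> over
  \<open>[t - h, t]\<close>. There \<open>z \<le> z t\<close>, so integrating \<open>z'' = q z\<close> gives \<open>z' t - z' s \<le> z t * Q\<close>, and the
  mean value theorem on \<open>[t - h, t]\<close> turns this into \<open>z' t / z t < 1 / h + Q\<close>; decreasing solutions
  are treated symmetrically on \<open>[t, t + h]\<close>. With \<open>h = d(x) / 2\<close> and \<open>|s - x| \<le> d(x) / 2\<close> these
  windows lie in \<open>[x - d(x), x + d(x)]\<close>, over which \<open>q\<close> integrates to \<open>2 / d(x)\<close>. Hence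
  \<open>|(ln z)'| \<le> 4 / d(x)\<close> on \<open>[x - d(x) / 2, x + d(x) / 2]\<close>, and \<open>c = e\<^sup>2\<close> works for \<open>u\<close> and \<open>v\<close>.

  Integrating \<open>z'' = q z\<close> needs the fundamental theorem of calculus for the absolutely continuous
  function \<open>z'\<close>, whose derivative exists only almost everywhere. It is proved by a gauge argument:
  tags outside the null set are handled by differentiability, tags inside it by absolute
  continuity together with an open cover of the null set of small measure.
\<close>

section \<open>Fundamental theorem of calculus for absolutely continuous functions\<close>

lemma abs_cont_onD:
  assumes "abs_cont_on a b f" and "e > 0"
  obtains \<eta> where "\<eta> > 0"
    and "\<And>(I::'i set) l r. finite I \<Longrightarrow> (\<forall>i\<in>I. a \<le> l i \<and> l i \<le> r i \<and> r i \<le> b) \<Longrightarrow>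
      (\<forall>i\<in>I. \<forall>j\<in>I. i \<noteq> j \<longrightarrow> r i \<le> l j \<or> r j \<le> l i) \<Longrightarrow> (\<Sum>i\<in>I. r i - l i) < \<eta> \<Longrightarrow>
      (\<Sum>i\<in>I. \<bar>f (r i) - f (l i)\<bar>) < e"
proof -
  obtain \<eta> where "\<eta> > 0" and ac: "\<forall>(n::nat) l r. (\<forall>i<n. a \<le> l i \<and> l i \<le> r i \<and> r i \<le> b) \<and>
      (\<forall>i<n. \<forall>j<n. i \<noteq> j \<longrightarrow> r i \<le> l j \<or> r j \<le> l i) \<and> (\<Sum>i<n. r i - l i) < \<eta> \<longrightarrow>
      (\<Sum>i<n. \<bar>f (r i) - f (l i)\<bar>) < e"
    using assms(1)[unfolded abs_cont_on_def, rule_format, OF assms(2)] by (elim exE conjE) (rule that)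
  show thesis
  proof (rule that[OF \<open>\<eta> > 0\<close>])
    fix I :: "'i set" and l r
    assume "finite I" and bounds: "\<forall>i\<in>I. a \<le> l i \<and> l i \<le> r i \<and> r i \<le> b"
      and disjoint: "\<forall>i\<in>I. \<forall>j\<in>I. i \<noteq> j \<longrightarrow> r i \<le> l j \<or> r j \<le> l i"
      and small: "(\<Sum>i\<in>I. r i - l i) < \<eta>"
    obtain h where h: "bij_betw h {..<card I} I"
      using ex_bij_betw_nat_finite[OF \<open>finite I\<close>] by (metis atLeast0LessThan)
    have reindex: "(\<Sum>i<card I. g (h i)) = (\<Sum>i\<in>I. g i)" for g :: "'i \<Rightarrow> real"
      by (rule sum.reindex_bij_betw[OF h])
    have "h i \<in> I" if "i < card I" for i
      using h that by (auto dest: bij_betwE)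
    moreover have "h i \<noteq> h j" if "i < card I" "j < card I" "i \<noteq> j" for i j
      using h that by (auto simp: bij_betw_def inj_on_def)
    ultimately have "(\<Sum>i<card I. \<bar>f (r (h i)) - f (l (h i))\<bar>) < e"
      using bounds disjoint small reindex[of "\<lambda>i. r i - l i"]
      by (intro ac[rule_format, of "card I" "l \<circ> h" "r \<circ> h", simplified]) auto
    then show "(\<Sum>i\<in>I. \<bar>f (r i) - f (l i)\<bar>) < e"
      using reindex[of "\<lambda>i. \<bar>f (r i) - f (l i)\<bar>"] by simp
  qed
qed

lemma tagged_partial_division_real_interval:
  fixes S :: "real set"
  assumes "D tagged_partial_division_of S" and "(x, K) \<in> D"
  shows "K = {Inf K..Sup K}" and "Inf K \<le> x" and "x \<le> Sup K" and "K \<subseteq> S"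
    and "measure lborel K = Sup K - Inf K"
proof -
  obtain c d where K: "K = {c..d}"
    using tagged_partial_division_ofD(4)[OF assms] by force
  moreover have "x \<in> K" using tagged_partial_division_ofD(2)[OF assms] .
  ultimately show "K = {Inf K..Sup K}" "Inf K \<le> x" "x \<le> Sup K" "measure lborel K = Sup K - Inf K"
    by auto
  show "K \<subseteq> S" using tagged_partial_division_ofD(3)[OF assms] .
qed

lemma tagged_partial_division_real_separated:
  fixes S :: "real set"
  assumes D: "D tagged_partial_division_of S" and "(x, K) \<in> D" "(x', K') \<in> D" "(x, K) \<noteq> (x', K')"
    and "Inf K < Sup K" "Inf K' < Sup K'"
  shows "Sup K \<le> Inf K' \<or> Sup K' \<le> Inf K"
proof (rule ccontr)
  have "interior K = {Inf K<..<Sup K}" "interior K' = {Inf K'<..<Sup K'}"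
    using tagged_partial_division_real_interval(1)[OF D] assms(2,3) interior_atLeastAtMost_real
    by metis+
  moreover assume "\<not> ?thesis"
  ultimately have "(max (Inf K) (Inf K') + min (Sup K) (Sup K')) / 2 \<in> interior K \<inter> interior K'"
    using assms(5,6) by auto
  with tagged_partial_division_ofD(5)[OF assms(1-4)] show False by blast
qed

lemma abs_cont_on_tagged_division:
  assumes "abs_cont_on a b f" and "e > 0"
  obtains \<eta> where "\<eta> > 0"
    and "\<And>D. D tagged_partial_division_of {a..b} \<Longrightarrow> (\<Sum>(x, K)\<in>D. measure lborel K) < \<eta> \<Longrightarrow>
      (\<Sum>(x, K)\<in>D. \<bar>f (Sup K) - f (Inf K)\<bar>) < e"
proof -
  obtain \<eta> where "\<eta> > 0" and ac: "\<And>(I::(real \<times> real set) set) l r. finite I \<Longrightarrow>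
      (\<forall>i\<in>I. a \<le> l i \<and> l i \<le> r i \<and> r i \<le> b) \<Longrightarrow>
      (\<forall>i\<in>I. \<forall>j\<in>I. i \<noteq> j \<longrightarrow> r i \<le> l j \<or> r j \<le> l i) \<Longrightarrow> (\<Sum>i\<in>I. r i - l i) < \<eta> \<Longrightarrow>
      (\<Sum>i\<in>I. \<bar>f (r i) - f (l i)\<bar>) < e"
    by (rule abs_cont_onD[OF assms]) (rule that)
  show thesis
  proof (rule that[OF \<open>\<eta> > 0\<close>])
    fix D assume D: "D tagged_partial_division_of {a..b}"
      and small: "(\<Sum>(x, K)\<in>D. measure lborel K) < \<eta>"
    note interval = tagged_partial_division_real_interval[OF D]
    \<comment> \<open>Degenerate intervals contribute to neither sum but may overlap the others, so drop them.\<close>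
    define E where "E = {p \<in> D. Inf (snd p) < Sup (snd p)}"
    have "finite D" using tagged_partial_division_ofD(1)[OF D] .
    then have "finite E" unfolding E_def by (rule finite_subset[rotated]) blast
    have "(\<Sum>(x, K)\<in>E. \<bar>f (Sup K) - f (Inf K)\<bar>) < e"
      unfolding split_def
    proof (rule ac[OF \<open>finite E\<close>])
      show "\<forall>p\<in>E. a \<le> Inf (snd p) \<and> Inf (snd p) \<le> Sup (snd p) \<and> Sup (snd p) \<le> b"
        using interval unfolding E_def by fastforce
      show "\<forall>p\<in>E. \<forall>p'\<in>E. p \<noteq> p' \<longrightarrow> Sup (snd p) \<le> Inf (snd p') \<or> Sup (snd p') \<le> Inf (snd p)"
        using tagged_partial_division_real_separated[OF D] unfolding E_def by fastforce
      have "(\<Sum>p\<in>E. Sup (snd p) - Inf (snd p)) = (\<Sum>(x, K)\<in>E. measure lborel K)"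
        using interval(5) unfolding E_def split_def by (intro sum.cong) auto
      also have "\<dots> \<le> (\<Sum>(x, K)\<in>D. measure lborel K)"
        using \<open>finite D\<close> unfolding E_def by (intro sum_mono2) auto
      finally show "(\<Sum>p\<in>E. Sup (snd p) - Inf (snd p)) < \<eta>" using small by linarith
    qed
    moreover have "(\<Sum>(x, K)\<in>E. \<bar>f (Sup K) - f (Inf K)\<bar>) = (\<Sum>(x, K)\<in>D. \<bar>f (Sup K) - f (Inf K)\<bar>)"
      using interval(2,3) unfolding E_def
      by (intro sum.mono_neutral_left \<open>finite D\<close>) (auto, metis antisym not_le order_trans)
    ultimately show "(\<Sum>(x, K)\<in>D. \<bar>f (Sup K) - f (Inf K)\<bar>) < e" by simp
  qed
qed

lemma negligible_outer_open:
  assumes "negligible N" and "\<eta> > 0"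
  obtains T where "open T" "N \<subseteq> T" "T \<in> lmeasurable" "measure lebesgue T < \<eta>"
proof -
  have N: "N \<in> lmeasurable" "measure lebesgue N = 0"
    using assms(1) negligible_iff_measure by auto
  obtain T where T: "open T" "N \<subseteq> T" "T - N \<in> lmeasurable" "emeasure lebesgue (T - N) < ennreal \<eta>"
    using sets_lebesgue_outer_open[OF fmeasurableD[OF N(1)] assms(2)] by blast
  have TN: "T = (T - N) \<union> N" using T(2) by blast
  have "T \<in> lmeasurable" using TN fmeasurable.Un[OF T(3) N(1)] by simp
  moreover have "measure lebesgue (T - N) < \<eta>"
    using T(4) emeasure_eq_measure2[OF T(3)] by (simp add: ennreal_less_iff)
  then have "measure lebesgue T < \<eta>"
    using measure_Un_le[OF fmeasurableD[OF T(3)] fmeasurableD[OF N(1)]] N TN by simp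
  ultimately show thesis using that T by blast
qed

lemma tagged_sum_content_le_measure:
  assumes "D tagged_partial_division_of S" and "\<And>x K. (x, K) \<in> D \<Longrightarrow> K \<subseteq> T"
    and "T \<in> lmeasurable"
  shows "(\<Sum>(x, K)\<in>D. measure lborel K) \<le> measure lebesgue T"
proof -
  have D: "D tagged_division_of \<Union>(snd ` D)"
    by (rule tagged_partial_division_of_Union_self[OF assms(1)])
  have "(\<Sum>(x, K)\<in>D. measure lborel K) = sum (measure lborel) (snd ` D)"
    by (rule sum.over_tagged_division_lemma[OF D]) (simp add: content_eq_0_interior)
  also have "\<dots> = (\<Sum>K\<in>snd ` D. measure lebesgue K)"
  proof (rule sum.cong)
    fix K assume "K \<in> snd ` D"
    then obtain c d where "K = cbox c d" using tagged_partial_division_ofD(4)[OF assms(1)] by force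
    then show "measure lborel K = measure lebesgue K"
      by (metis cbox_borel measure_completion sets_lborel)
  qed simp
  also have "\<dots> = measure lebesgue (\<Union>(snd ` D))"
    by (rule content_division[OF division_of_tagged_division[OF D]])
  also have "\<dots> \<le> measure lebesgue T"
    using assms(2) lmeasurable_division[OF division_of_tagged_division[OF D]]
    by (intro measure_mono_fmeasurable[OF _ _ assms(3)]) force+
  finally show ?thesis .
qed

lemma tagged_sum_deriv_increment_le:
  fixes f g :: "real \<Rightarrow> real"
  assumes D: "D tagged_partial_division_of S"
    and approx: "\<And>x K y. (x, K) \<in> D \<Longrightarrow> y \<in> K \<Longrightarrow> \<bar>f y - f x - g x * (y - x)\<bar> \<le> \<epsilon> * \<bar>y - x\<bar>"
  shows "\<bar>\<Sum>(x, K)\<in>D. measure lborel K * g x - (f (Sup K) - f (Inf K))\<bar>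
           \<le> \<epsilon> * (\<Sum>(x, K)\<in>D. measure lborel K)"
proof -
  have term_le: "\<bar>measure lborel K * g x - (f (Sup K) - f (Inf K))\<bar> \<le> \<epsilon> * measure lborel K"
    if xK: "(x, K) \<in> D" for x K
  proof -
    note K = tagged_partial_division_real_interval[OF D xK]
    have "Inf K \<in> K" "Sup K \<in> K" using K(1-3) by (metis atLeastAtMost_iff order_trans order_refl)+
    then have "\<bar>f (Inf K) - f x - g x * (Inf K - x)\<bar> \<le> \<epsilon> * (x - Inf K)"
      "\<bar>f (Sup K) - f x - g x * (Sup K - x)\<bar> \<le> \<epsilon> * (Sup K - x)"
      using approx[OF xK] K(2,3) by fastforce+
    moreover have "measure lborel K * g x - (f (Sup K) - f (Inf K))
        = (f (Inf K) - f x - g x * (Inf K - x)) - (f (Sup K) - f x - g x * (Sup K - x))"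
      unfolding K(5) by (simp add: algebra_simps)
    ultimately have "\<bar>measure lborel K * g x - (f (Sup K) - f (Inf K))\<bar> \<le> \<epsilon> * (x - Inf K) + \<epsilon> * (Sup K - x)"
      by (smt (verit))
    also have "\<dots> = \<epsilon> * measure lborel K"
      unfolding K(5) by (simp add: algebra_simps)
    finally show ?thesis .
  qed
  have "\<bar>\<Sum>(x, K)\<in>D. measure lborel K * g x - (f (Sup K) - f (Inf K))\<bar>
          \<le> (\<Sum>(x, K)\<in>D. \<bar>measure lborel K * g x - (f (Sup K) - f (Inf K))\<bar>)"
    by (rule order_trans[OF sum_abs]) (simp add: split_def)
  also have "\<dots> \<le> (\<Sum>(x, K)\<in>D. \<epsilon> * measure lborel K)"
    by (rule sum_mono) (use term_le in auto)
  also have "\<dots> = \<epsilon> * (\<Sum>(x, K)\<in>D. measure lborel K)"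
    by (simp add: sum_distrib_left split_def)
  finally show ?thesis .
qed

lemma has_derivative_fine_tagged_sum_le:
  fixes f g :: "real \<Rightarrow> real"
  assumes deriv: "\<And>t. t \<in> A \<Longrightarrow> (f has_real_derivative g t) (at t)" and "\<epsilon> > 0"
  obtains \<gamma> where "gauge \<gamma>"
    and "\<And>D S. D tagged_partial_division_of S \<Longrightarrow> \<gamma> fine D \<Longrightarrow> (\<forall>(x, K)\<in>D. x \<in> A) \<Longrightarrow>
      \<bar>\<Sum>(x, K)\<in>D. measure lborel K * g x - (f (Sup K) - f (Inf K))\<bar>
        \<le> \<epsilon> * (\<Sum>(x, K)\<in>D. measure lborel K)"
proof -
  have "\<exists>\<delta>>0. t \<in> A \<longrightarrow> (\<forall>y. \<bar>y - t\<bar> < \<delta> \<longrightarrow> \<bar>f y - f t - g t * (y - t)\<bar> \<le> \<epsilon> * \<bar>y - t\<bar>)" for t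
  proof (cases "t \<in> A")
    case True
    then have "(f has_derivative (\<lambda>y. g t * y)) (at t)"
      using deriv by (simp add: has_field_derivative_def)
    then show ?thesis
      using \<open>\<epsilon> > 0\<close> unfolding has_derivative_at_alt real_norm_def by blast
  qed (intro exI[of _ 1], simp)
  then obtain \<delta> where \<delta>: "\<forall>t. \<delta> t > 0 \<and> (t \<in> A \<longrightarrow>
      (\<forall>y. \<bar>y - t\<bar> < \<delta> t \<longrightarrow> \<bar>f y - f t - g t * (y - t)\<bar> \<le> \<epsilon> * \<bar>y - t\<bar>))"
    by (metis choice)
  show thesis
  proof (rule that)
    show "gauge (\<lambda>t. ball t (\<delta> t))" using \<delta> gauge_ball_dependent by blast
    fix D S assume D: "D tagged_partial_division_of S" and "(\<lambda>t. ball t (\<delta> t)) fine D"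
      and tags: "\<forall>(x, K)\<in>D. x \<in> A"
    then have "\<And>x K y. (x, K) \<in> D \<Longrightarrow> y \<in> K \<Longrightarrow> \<bar>y - x\<bar> < \<delta> x"
      by (fastforce simp: fine_def dist_real_def)
    then show "\<bar>\<Sum>(x, K)\<in>D. measure lborel K * g x - (f (Sup K) - f (Inf K))\<bar>
        \<le> \<epsilon> * (\<Sum>(x, K)\<in>D. measure lborel K)"
      using \<delta> tags by (intro tagged_sum_deriv_increment_le[OF D]) blast
  qed
qed

lemma abs_cont_on_fine_null_tags:
  assumes "abs_cont_on a b f" and "negligible N" and "e > 0"
  obtains \<gamma> where "gauge \<gamma>"
    and "\<And>D. D tagged_partial_division_of {a..b} \<Longrightarrow> \<gamma> fine D \<Longrightarrow> (\<forall>(x, K)\<in>D. x \<in> N) \<Longrightarrow>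
      (\<Sum>(x, K)\<in>D. \<bar>f (Sup K) - f (Inf K)\<bar>) < e"
proof -
  obtain \<eta> where "\<eta> > 0" and ac: "\<And>D. D tagged_partial_division_of {a..b} \<Longrightarrow>
      (\<Sum>(x, K)\<in>D. measure lborel K) < \<eta> \<Longrightarrow> (\<Sum>(x, K)\<in>D. \<bar>f (Sup K) - f (Inf K)\<bar>) < e"
    using abs_cont_on_tagged_division[OF assms(1,3)] by blast
  obtain T where "open T" "N \<subseteq> T" "T \<in> lmeasurable" "measure lebesgue T < \<eta>"
    using negligible_outer_open[OF assms(2) \<open>\<eta> > 0\<close>] by blast
  define \<gamma> where "\<gamma> x = (if x \<in> N then T else UNIV)" for x
  show thesis
  proof (rule that)
    show "gauge \<gamma>"
      using \<open>open T\<close> \<open>N \<subseteq> T\<close> unfolding gauge_def \<gamma>_def by auto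
    fix D assume D: "D tagged_partial_division_of {a..b}" and fine: "\<gamma> fine D"
      and tags: "\<forall>(x, K)\<in>D. x \<in> N"
    have "K \<subseteq> T" if "(x, K) \<in> D" for x K
      using fine that tags unfolding fine_def \<gamma>_def by fastforce
    then have "(\<Sum>(x, K)\<in>D. measure lborel K) \<le> measure lebesgue T"
      by (rule tagged_sum_content_le_measure[OF D _ \<open>T \<in> lmeasurable\<close>])
    then show "(\<Sum>(x, K)\<in>D. \<bar>f (Sup K) - f (Inf K)\<bar>) < e"
      using \<open>measure lebesgue T < \<eta>\<close> by (intro ac[OF D]) simp
  qed
qed

lemma tagged_division_riemann_sum_split:
  fixes f g :: "real \<Rightarrow> real" and N :: "real set"
  assumes "a \<le> b" and D: "D tagged_division_of {a..b}"
  defines "D1 \<equiv> D \<inter> {p. fst p \<notin> N}" and "D2 \<equiv> D - {p. fst p \<notin> N}"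
  shows "(\<Sum>(x, K)\<in>D. measure lborel K *\<^sub>R (if x \<in> N then 0 else g x)) - (f b - f a)
    = (\<Sum>(x, K)\<in>D1. measure lborel K * g x - (f (Sup K) - f (Inf K))) - (\<Sum>(x, K)\<in>D2. f (Sup K) - f (Inf K))"
proof -
  define h where "h x = (if x \<in> N then 0 else g x)" for x
  have "(\<Sum>(x, K)\<in>D. measure lborel K *\<^sub>R h x) - (f b - f a)
      = (\<Sum>(x, K)\<in>D. measure lborel K * h x - (f (Sup K) - f (Inf K)))"
    using additive_tagged_division_1[OF assms(1,2), of f] by (simp add: sum_subtractf split_def)
  also have "\<dots> = (\<Sum>(x, K)\<in>D1. measure lborel K * h x - (f (Sup K) - f (Inf K)))
                  + (\<Sum>(x, K)\<in>D2. measure lborel K * h x - (f (Sup K) - f (Inf K)))"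
    unfolding D1_def D2_def by (rule sum.Int_Diff[OF tagged_division_of_finite[OF D]])
  also have "(\<Sum>(x, K)\<in>D1. measure lborel K * h x - (f (Sup K) - f (Inf K)))
      = (\<Sum>(x, K)\<in>D1. measure lborel K * g x - (f (Sup K) - f (Inf K)))"
    by (intro sum.cong) (auto simp: D1_def h_def)
  also have "(\<Sum>(x, K)\<in>D2. measure lborel K * h x - (f (Sup K) - f (Inf K)))
      = - (\<Sum>(x, K)\<in>D2. f (Sup K) - f (Inf K))"
    unfolding sum_negf[symmetric] by (intro sum.cong) (auto simp: D2_def h_def)
  finally show ?thesis by (simp add: h_def)
qed

lemma fundamental_theorem_of_calculus_abs_cont:
  fixes f g :: "real \<Rightarrow> real"
  assumes "a \<le> b" and "abs_cont_on a b f" and "negligible N"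
    and deriv: "\<And>t. t \<in> {a..b} - N \<Longrightarrow> (f has_real_derivative g t) (at t)"
  shows "(g has_integral (f b - f a)) {a..b}"
proof -
  have "((\<lambda>x. if x \<in> N then 0 else g x) has_integral (f b - f a)) {a..b}"
    unfolding has_integral_real
  proof (intro allI impI)
    fix e :: real assume "e > 0"
    define \<epsilon> where "\<epsilon> = e / (4 * (b - a + 1))"
    have "\<epsilon> > 0" and "\<epsilon> * (b - a) < e / 4"
      using \<open>e > 0\<close> \<open>a \<le> b\<close> by (simp_all add: \<epsilon>_def field_simps)
    obtain \<gamma>1 where "gauge \<gamma>1" and null: "\<And>D. D tagged_partial_division_of {a..b} \<Longrightarrow> \<gamma>1 fine D \<Longrightarrow>
        (\<forall>(x, K)\<in>D. x \<in> N) \<Longrightarrow> (\<Sum>(x, K)\<in>D. \<bar>f (Sup K) - f (Inf K)\<bar>) < e / 2"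
      by (rule abs_cont_on_fine_null_tags[OF assms(2,3) half_gt_zero[OF \<open>e > 0\<close>]]) (rule that)
    obtain \<gamma>2 where "gauge \<gamma>2" and regular: "\<And>D S. D tagged_partial_division_of S \<Longrightarrow> \<gamma>2 fine D \<Longrightarrow>
        (\<forall>(x, K)\<in>D. x \<in> {a..b} - N) \<Longrightarrow>
        \<bar>\<Sum>(x, K)\<in>D. measure lborel K * g x - (f (Sup K) - f (Inf K))\<bar>
          \<le> \<epsilon> * (\<Sum>(x, K)\<in>D. measure lborel K)"
      by (rule has_derivative_fine_tagged_sum_le[OF deriv \<open>\<epsilon> > 0\<close>]) (assumption, rule that)
    show "\<exists>\<gamma>. gauge \<gamma> \<and> (\<forall>D. D tagged_division_of {a..b} \<and> \<gamma> fine D \<longrightarrow>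
        norm ((\<Sum>(x, K)\<in>D. measure lborel K *\<^sub>R (if x \<in> N then 0 else g x)) - (f b - f a)) < e)"
    proof (intro exI conjI allI impI)
      show "gauge (\<lambda>x. \<gamma>1 x \<inter> \<gamma>2 x)" using gauge_Int[OF \<open>gauge \<gamma>1\<close> \<open>gauge \<gamma>2\<close>] .
      fix D assume "D tagged_division_of {a..b} \<and> (\<lambda>x. \<gamma>1 x \<inter> \<gamma>2 x) fine D"
      then have D: "D tagged_division_of {a..b}" and "\<gamma>1 fine D" "\<gamma>2 fine D"
        by (auto simp: fine_Int)
      define D1 where "D1 = D \<inter> {p. fst p \<notin> N}"
      define D2 where "D2 = D - {p. fst p \<notin> N}"
      have "D1 \<subseteq> D" "D2 \<subseteq> D" by (auto simp: D1_def D2_def)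
      then have "D1 tagged_partial_division_of {a..b}" "D2 tagged_partial_division_of {a..b}"
        and "\<gamma>1 fine D2" "\<gamma>2 fine D1"
        using D \<open>\<gamma>1 fine D\<close> \<open>\<gamma>2 fine D\<close> tagged_partial_division_subset fine_subset
        unfolding tagged_division_of_def by metis+
      have "(\<Sum>(x, K)\<in>D1. measure lborel K) \<le> (\<Sum>(x, K)\<in>D. measure lborel K)"
        using \<open>D1 \<subseteq> D\<close> tagged_division_of_finite[OF D] by (intro sum_mono2) auto
      also have "\<dots> = b - a"
        using additive_content_tagged_division[of D a b] D \<open>a \<le> b\<close> by simp
      finally have "(\<Sum>(x, K)\<in>D1. measure lborel K) \<le> b - a" .
      have "\<bar>\<Sum>(x, K)\<in>D1. measure lborel K * g x - (f (Sup K) - f (Inf K))\<bar>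
              \<le> \<epsilon> * (\<Sum>(x, K)\<in>D1. measure lborel K)"
        by (intro regular[OF \<open>D1 tagged_partial_division_of {a..b}\<close> \<open>\<gamma>2 fine D1\<close>])
           (use tag_in_interval[OF D] in \<open>auto simp: D1_def\<close>)
      also have "\<dots> \<le> \<epsilon> * (b - a)"
        using \<open>(\<Sum>(x, K)\<in>D1. measure lborel K) \<le> b - a\<close> \<open>\<epsilon> > 0\<close> by simp
      finally have "\<bar>\<Sum>(x, K)\<in>D1. measure lborel K * g x - (f (Sup K) - f (Inf K))\<bar> \<le> \<epsilon> * (b - a)" .
      moreover have "(\<Sum>(x, K)\<in>D2. \<bar>f (Sup K) - f (Inf K)\<bar>) < e / 2"
        by (intro null \<open>D2 tagged_partial_division_of {a..b}\<close> \<open>\<gamma>1 fine D2\<close>) (auto simp: D2_def)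
      moreover have "\<bar>\<Sum>(x, K)\<in>D2. f (Sup K) - f (Inf K)\<bar> \<le> (\<Sum>(x, K)\<in>D2. \<bar>f (Sup K) - f (Inf K)\<bar>)"
        by (rule order_trans[OF sum_abs]) (simp add: split_def)
      ultimately show "norm ((\<Sum>(x, K)\<in>D. measure lborel K *\<^sub>R (if x \<in> N then 0 else g x)) - (f b - f a)) < e"
        using \<open>\<epsilon> * (b - a) < e / 4\<close> unfolding real_norm_def
          tagged_division_riemann_sum_split[OF \<open>a \<le> b\<close> D, of N g f, folded D1_def D2_def]
        by linarith
    qed
  qed
  then show ?thesis
    by (rule has_integral_spike[OF assms(3), rotated]) simp
qed

section \<open>Admissible coefficients and their solutions\<close>

lemma has_integral_le_off_negligible:
  fixes f g :: "real \<Rightarrow> real"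
  assumes "(f has_integral i) S" and "(g has_integral j) S" and "negligible N"
    and "\<And>x. x \<in> S \<Longrightarrow> x \<notin> N \<Longrightarrow> f x \<le> g x"
  shows "i \<le> j"
proof -
  have "((\<lambda>x. if x \<in> N then g x else f x) has_integral i) S"
    by (rule has_integral_spike[OF assms(3) _ assms(1)]) simp
  then show ?thesis
    by (rule has_integral_le[OF _ assms(2)]) (simp add: assms(4))
qed

lemma AE_lborel_negligibleE:
  assumes "AE x in lborel. P x"
  obtains N :: "real set" where "negligible N" and "\<And>x. x \<notin> N \<Longrightarrow> P x"
proof -
  obtain N where "{x \<in> space lborel. \<not> P x} \<subseteq> N" "emeasure lborel N = 0" "N \<in> sets lborel"
    using assms by (rule AE_E)
  then have "N \<in> null_sets lebesgue"
    by (intro null_sets_completionI) (simp add: null_sets_def)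
  then show thesis
    using that \<open>{x \<in> space lborel. \<not> P x} \<subseteq> N\<close> negligible_iff_null_sets by auto
qed

lemma admissible_q_integrable: "admissible_q q \<Longrightarrow> q integrable_on {a..b}"
  unfolding admissible_q_def using set_borel_integral_eq_integral(1) by blast

lemma admissible_q_ge_one:
  assumes "admissible_q q"
  obtains N where "negligible N" and "\<And>x. x \<notin> N \<Longrightarrow> 1 \<le> q x"
  using AE_lborel_negligibleE[of "\<lambda>x. 1 \<le> q x"] assms unfolding admissible_q_def by blast

lemma admissible_q_integral_ge:
  assumes "admissible_q q" and "a \<le> b"
  shows "b - a \<le> integral {a..b} q"
proof -
  obtain N where "negligible N" "\<And>x. x \<notin> N \<Longrightarrow> 1 \<le> q x"
    using admissible_q_ge_one[OF assms(1)] by blast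
  then show ?thesis
    using has_integral_const_real[of "1::real" a b] assms
    by (intro has_integral_le_off_negligible[OF _ integrable_integral[OF admissible_q_integrable]]) auto
qed

lemma admissible_q_integral_mono:
  assumes "admissible_q q" and "c \<le> a" "a \<le> b" "b \<le> d"
  shows "integral {a..b} q \<le> integral {c..d} q"
proof -
  have "integral {c..d} q = integral {c..a} q + integral {a..d} q"
    using assms by (intro Henstock_Kurzweil_Integration.integral_combine[symmetric] admissible_q_integrable) auto
  moreover have "integral {a..d} q = integral {a..b} q + integral {b..d} q"
    using assms by (intro Henstock_Kurzweil_Integration.integral_combine[symmetric] admissible_q_integrable) auto
  moreover have "a - c \<le> integral {c..a} q" "d - b \<le> integral {b..d} q"
    using admissible_q_integral_ge[OF assms(1)] assms by auto
  ultimately show ?thesis using assms by linarith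
qed

lemma solution_has_integral_deriv:
  assumes "is_solution q z z'" and "a \<le> b"
  shows "((\<lambda>t. q t * z t) has_integral (z' b - z' a)) {a..b}"
proof -
  have "AE t in lborel. (z' has_real_derivative q t * z t) (at t)"
    using assms(1) unfolding is_solution_def by blast
  then obtain N where "negligible N" and deriv: "\<And>t. t \<notin> N \<Longrightarrow> (z' has_real_derivative q t * z t) (at t)"
    by (rule AE_lborel_negligibleE) (rule that)
  have "abs_cont_on a b z'"
    using assms unfolding is_solution_def loc_abs_cont_def by blast
  show ?thesis
    by (rule fundamental_theorem_of_calculus_abs_cont[OF assms(2) \<open>abs_cont_on a b z'\<close> \<open>negligible N\<close>])
       (simp add: deriv)
qed

lemma solution_deriv_increment_le:
  assumes "admissible_q q" and "is_solution q z z'" and "a \<le> b"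
    and "\<And>t. t \<in> {a..b} \<Longrightarrow> z t \<le> M"
  shows "z' b - z' a \<le> M * integral {a..b} q"
proof -
  obtain N where "negligible N" and q_ge: "\<And>x. x \<notin> N \<Longrightarrow> 1 \<le> q x"
    using admissible_q_ge_one[OF assms(1)] by blast
  show ?thesis
  proof (rule has_integral_le_off_negligible[OF solution_has_integral_deriv[OF assms(2,3)] _ \<open>negligible N\<close>])
    show "((\<lambda>t. M * q t) has_integral M * integral {a..b} q) {a..b}"
      by (intro has_integral_mult_right integrable_integral admissible_q_integrable[OF assms(1)])
    fix t assume "t \<in> {a..b}" "t \<notin> N"
    then have "q t * z t \<le> q t * M"
      using q_ge assms(4) by (intro mult_left_mono) (auto intro: order_trans[OF zero_le_one])
    then show "q t * z t \<le> M * q t" by (simp add: mult.commute)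
  qed
qed

lemma continuous_on_integral_symmetric:
  fixes f :: "real \<Rightarrow> real"
  assumes "\<And>a b. f integrable_on {a..b}"
  shows "continuous_on {0..r} (\<lambda>d. integral {x - d..x + d} f)"
proof -
  have F: "continuous_on {x - r..x + r} (\<lambda>y. integral {x - r..y} f)"
    by (rule indefinite_integral_continuous_1[OF assms])
  have "continuous_on {0..r} (\<lambda>d. integral {x - r..x + d} f - integral {x - r..x - d} f)"
    by (intro continuous_intros continuous_on_compose2[OF F]) auto
  moreover have "integral {x - r..x + d} f - integral {x - r..x - d} f = integral {x - d..x + d} f"
    if "d \<in> {0..r}" for d
    using that Henstock_Kurzweil_Integration.integral_combine[OF _ _ assms, of "x - r" "x - d" "x + d"] by simp
  ultimately show ?thesis by (rule continuous_on_eq) simp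
qed

lemma
  assumes "admissible_q q"
  shows dfun_pos: "dfun q x > 0"
    and dfun_times_integral: "dfun q x * integral {x - dfun q x..x + dfun q x} q = 2"
proof -
  define I where "I d = integral {x - d..x + d} q" for d
  have I_ge: "2 * d \<le> I d" if "d \<ge> 0" for d
    using admissible_q_integral_ge[OF assms, of "x - d" "x + d"] that by (simp add: I_def)
  have strict_mono: "d * I d < d' * I d'" if "0 < d" "d < d'" for d d'
  proof -
    have "d * I d < d' * I d" using I_ge[of d] that by simp
    also have "\<dots> \<le> d' * I d'"
      using that admissible_q_integral_mono[OF assms] by (intro mult_left_mono) (auto simp: I_def)
    finally show ?thesis .
  qed
  have "continuous_on {0..1} (\<lambda>d. d * I d)"
    unfolding I_def
    by (intro continuous_intros continuous_on_integral_symmetric admissible_q_integrable[OF assms])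
  moreover have "2 \<le> 1 * I 1" using I_ge[of 1] by simp
  ultimately obtain d where "0 \<le> d" "d \<le> 1" "d * I d = 2"
    using IVT'[of "\<lambda>d. d * I d" 0 2 1] by auto
  then have "d > 0" by (cases "d = 0") auto
  have "\<exists>!d. d > 0 \<and> d * I d = 2"
  proof (rule ex1I)
    show "d > 0 \<and> d * I d = 2" using \<open>d > 0\<close> \<open>d * I d = 2\<close> by blast
    show "d' = d" if "d' > 0 \<and> d' * I d' = 2" for d'
      using that strict_mono[of d' d] strict_mono[of d d'] \<open>d > 0\<close> \<open>d * I d = 2\<close>
      by (cases d' d rule: linorder_cases) auto
  qed
  from theI'[OF this] show "dfun q x > 0" and "dfun q x * integral {x - dfun q x..x + dfun q x} q = 2"
    unfolding dfun_def I_def by auto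
qed

section \<open>Logarithmic derivatives of monotone solutions\<close>

lemma increasing_solution_log_deriv_lt:
  assumes "admissible_q q" and "is_solution q z z'" and pos: "\<And>s. z s > 0"
    and incr: "\<And>s. z' s > 0" and "h > 0"
  shows "z' t / z t < 1 / h + integral {t - h..t} q"
proof -
  have deriv: "\<And>s. (z has_real_derivative z' s) (at s)"
    using assms(2) by (simp add: is_solution_def)
  have mono: "z s \<le> z s'" if "s \<le> s'" for s s'
    by (rule DERIV_nonneg_imp_nondecreasing[OF that]) (use deriv incr less_imp_le in blast)
  define Q where "Q = integral {t - h..t} q"
  have z'_ge: "z' t - z t * Q \<le> z' s" if "s \<in> {t - h..t}" for s
  proof -
    have "z' t - z' s \<le> z t * integral {s..t} q"
      by (rule solution_deriv_increment_le[OF assms(1,2)]) (use that mono in auto)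
    also have "\<dots> \<le> z t * Q"
      unfolding Q_def using that pos[of t] admissible_q_integral_mono[OF assms(1)]
      by (intro mult_left_mono) auto
    finally show ?thesis by simp
  qed
  have "t - h < t" using \<open>h > 0\<close> by simp
  from MVT2[OF this deriv] obtain \<xi> where "t - h < \<xi>" "\<xi> < t" "z t - z (t - h) = h * z' \<xi>"
    by auto
  then have "h * (z' t - z t * Q) \<le> z t - z (t - h)"
    using z'_ge[of \<xi>] \<open>h > 0\<close> by simp
  also have "\<dots> < z t" using pos[of "t - h"] by simp
  finally show ?thesis
    using pos[of t] \<open>h > 0\<close> by (simp add: Q_def field_simps)
qed

lemma decreasing_solution_log_deriv_lt:
  assumes "admissible_q q" and "is_solution q z z'" and pos: "\<And>s. z s > 0"
    and decr: "\<And>s. z' s < 0" and "h > 0"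
  shows "- z' t / z t < 1 / h + integral {t..t + h} q"
proof -
  have deriv: "\<And>s. (z has_real_derivative z' s) (at s)"
    using assms(2) by (simp add: is_solution_def)
  have anti: "z s' \<le> z s" if "s \<le> s'" for s s'
    by (rule DERIV_nonpos_imp_nonincreasing[OF that]) (use deriv decr less_imp_le in blast)
  define Q where "Q = integral {t..t + h} q"
  have z'_le: "z' s \<le> z' t + z t * Q" if "s \<in> {t..t + h}" for s
  proof -
    have "z' s - z' t \<le> z t * integral {t..s} q"
      by (rule solution_deriv_increment_le[OF assms(1,2)]) (use that anti in auto)
    also have "\<dots> \<le> z t * Q"
      unfolding Q_def using that pos[of t] admissible_q_integral_mono[OF assms(1)]
      by (intro mult_left_mono) auto
    finally show ?thesis by simp
  qed
  have "t < t + h" using \<open>h > 0\<close> by simp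
  from MVT2[OF this deriv] obtain \<xi> where "t < \<xi>" "\<xi> < t + h" "z (t + h) - z t = h * z' \<xi>"
    by auto
  then have "z (t + h) - z t \<le> h * (z' t + z t * Q)"
    using z'_le[of \<xi>] \<open>h > 0\<close> by simp
  then have "- h * (z' t + z t * Q) < z t" using pos[of "t + h"] by simp
  then show ?thesis
    using pos[of t] \<open>h > 0\<close> by (simp add: Q_def field_simps)
qed

lemma exp_bounds_of_log_deriv_le:
  fixes z z' :: "real \<Rightarrow> real"
  assumes deriv: "\<And>s. (z has_real_derivative z' s) (at s)" and pos: "\<And>s. z s > 0"
    and bound: "\<And>s. s \<in> closed_segment x t \<Longrightarrow> \<bar>z' s / z s\<bar> \<le> B" and "\<bar>t - x\<bar> * B \<le> c"
  shows "z x / exp c \<le> z t \<and> z t \<le> exp c * z x"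
proof -
  have "norm (ln (z t) - ln (z x)) \<le> B * norm (t - x)"
  proof (rule field_differentiable_bound[OF convex_closed_segment])
    fix s
    show "((\<lambda>s. ln (z s)) has_field_derivative 1 / z s * z' s) (at s within closed_segment x t)"
      by (rule has_field_derivative_at_within[OF DERIV_chain2[OF DERIV_ln_divide[OF pos] deriv]])
    assume "s \<in> closed_segment x t"
    then show "norm (1 / z s * z' s) \<le> B" using bound by simp
  qed auto
  then have "ln (z x) - c \<le> ln (z t)" "ln (z t) \<le> ln (z x) + c"
    using assms(4) by (simp_all add: abs_le_iff mult.commute)
  have "z x / exp c = exp (ln (z x) - c)" using pos[of x] by (simp add: exp_diff)
  also have "\<dots> \<le> z t"
    using \<open>ln (z x) - c \<le> ln (z t)\<close> pos[of t] by (metis exp_le_cancel_iff exp_ln)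
  finally have "z x / exp c \<le> z t" .
  moreover have "z t \<le> exp (ln (z x) + c)"
    using \<open>ln (z t) \<le> ln (z x) + c\<close> pos[of t] by (metis exp_le_cancel_iff exp_ln)
  ultimately show ?thesis using pos[of x] by (simp add: exp_add mult.commute)
qed

lemma PFSS_log_deriv_le:
  assumes "admissible_q q" and "is_PFSS q u u' v v'" and "\<bar>s - x\<bar> \<le> dfun q x / 2"
  shows "\<bar>v' s / v s\<bar> \<le> 4 / dfun q x" and "\<bar>u' s / u s\<bar> \<le> 4 / dfun q x"
proof -
  define d where "d = dfun q x"
  have "d > 0" and window: "integral {x - d..x + d} q = 2 / d"
    using dfun_pos[OF assms(1), of x] dfun_times_integral[OF assms(1), of x]
    by (simp_all add: d_def field_simps)
  have window_le: "integral {a..b} q \<le> 2 / d" if "x - d \<le> a" "a \<le> b" "b \<le> x + d" for a b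
    using admissible_q_integral_mono[OF assms(1) that] window by simp
  have s: "x - d \<le> s - d / 2" "s + d / 2 \<le> x + d"
    using assms(3) unfolding d_def abs_le_iff by linarith+
  have "is_solution q u u'" "is_solution q v v'"
    and "\<And>s. u s > 0" "\<And>s. v s > 0" "\<And>s. u' s < 0" "\<And>s. v' s > 0"
    using assms(2) unfolding is_PFSS_def by blast+
  have "v' s / v s < 1 / (d / 2) + integral {s - d / 2..s} q"
    using increasing_solution_log_deriv_lt[OF assms(1) \<open>is_solution q v v'\<close>
        \<open>\<And>s. v s > 0\<close> \<open>\<And>s. v' s > 0\<close>, where h = "d / 2" and t = s] \<open>d > 0\<close> by simp
  also have "\<dots> \<le> 4 / d"
    using window_le[of "s - d / 2" s] s \<open>d > 0\<close> by simp
  finally have "v' s / v s < 4 / d" .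
  moreover have "- u' s / u s < 1 / (d / 2) + integral {s..s + d / 2} q"
    using decreasing_solution_log_deriv_lt[OF assms(1) \<open>is_solution q u u'\<close>
        \<open>\<And>s. u s > 0\<close> \<open>\<And>s. u' s < 0\<close>, where h = "d / 2" and t = s] \<open>d > 0\<close> by simp
  moreover have "\<dots> \<le> 4 / d"
    using window_le[of s "s + d / 2"] s \<open>d > 0\<close> by simp
  moreover have "v' s / v s > 0" "u' s / u s < 0"
    using \<open>v s > 0\<close> \<open>v' s > 0\<close> \<open>u s > 0\<close> \<open>u' s < 0\<close> by (simp_all add: divide_neg_pos)
  ultimately show "\<bar>v' s / v s\<bar> \<le> 4 / dfun q x" and "\<bar>u' s / u s\<bar> \<le> 4 / dfun q x"
    unfolding d_def by linarith+
qed

theorem lemma5p1: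
  shows "\<exists>c\<ge>(1::real). \<forall>q u u' v v'. admissible_q q \<and> is_PFSS q u u' v v' \<longrightarrow>
           (\<forall>x t. t \<in> {x - dfun q x / 2 .. x + dfun q x / 2} \<longrightarrow>
              v x / c \<le> v t \<and> v t \<le> c * v x \<and> u x / c \<le> u t \<and> u t \<le> c * u x)"
proof (intro exI[of _ "exp 2"] conjI allI impI)
  show "1 \<le> exp (2::real)" by simp
  fix q u u' v v' x t
  assume "admissible_q q \<and> is_PFSS q u u' v v'" and t: "t \<in> {x - dfun q x / 2 .. x + dfun q x / 2}"
  then have adm: "admissible_q q" and PFSS: "is_PFSS q u u' v v'" by blast+
  have "\<bar>s - x\<bar> \<le> dfun q x / 2" if "s \<in> closed_segment x t" for s
    using that t by (auto simp: closed_segment_eq_real_ivl split: if_splits)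
  note log_deriv = PFSS_log_deriv_le[OF adm PFSS this]
  have "\<bar>t - x\<bar> \<le> dfun q x / 2"
    using t unfolding abs_le_iff atLeastAtMost_iff by linarith
  then have "\<bar>t - x\<bar> * (4 / dfun q x) \<le> dfun q x / 2 * (4 / dfun q x)"
    using dfun_pos[OF adm, of x] by (intro mult_right_mono) auto
  then have window_length: "\<bar>t - x\<bar> * (4 / dfun q x) \<le> 2"
    using dfun_pos[OF adm, of x] by simp
  have "\<And>s. (u has_real_derivative u' s) (at s)" "\<And>s. (v has_real_derivative v' s) (at s)"
    and "\<And>s. u s > 0" "\<And>s. v s > 0"
    using PFSS unfolding is_PFSS_def is_solution_def by blast+
  from exp_bounds_of_log_deriv_le[OF this(2,4) log_deriv(1) window_length]
    exp_bounds_of_log_deriv_le[OF this(1,3) log_deriv(2) window_length]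
  show "v x / exp 2 \<le> v t" "v t \<le> exp 2 * v x" "u x / exp 2 \<le> u t" "u t \<le> exp 2 * u x"
    by simp_all
qed

end
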